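(* Let $u$ be a coherent utility on $L^0$ with determining set $\mathcal{D}$, let $Y$ be a random variable or random vector, and let $X,W\in L^1_s(\mathcal{D})\cap L^1_s(\mathsf{E}(\mathcal{D}\mid Y))\cap L^1$. Then $$u^{fc}(X;Y;W)=u^c\big(\mathsf{E}(X\mid Y);\mathsf{E}(W\mid Y)\big).$$
   Context: Let $(\Omega,\mathcal{F},\mathsf{P})$ be a probability space, $L^0$ the space of all real random variables, $L^1=L^1(\mathsf{P})$, and $\mathcal{P}$ the set of probability measures on $\mathcal{F}$ absolutely continuous with respect to $\mathsf{P}$; measures are identified with their densities. For $\mathsf{Q}\in\mathcal{P}$, $\mathsf{E}_\mathsf{Q}X:=\mathsf{E}_\mathsf{Q}X^+-\mathsf{E}_\mathsf{Q}X^-$ with the convention $\infty-\infty=-\infty$. A coherent utility on $L^0$ is a map $u:L^0\to[-\infty,\infty]$ of the form $u(X)=\inf_{\mathsf{Q}\in\mathcal{D}}\mathsf{E}_\mathsf{Q}X$ for a nonempty $\mathcal{D}\subseteq\mathcal{P}$; its determining set is the largest such set, $\{\mathsf{Q}\in\mathcal{P}:\mathsf{E}_\mathsf{Q}X\ge u(X)\ \forall X\in L^0\}$. For $\mathcal{C}\subseteq\mathcal{P}$, $L^1_s(\mathcal{C})=\{X\in L^0:\lim_{n\to\infty}\sup_{\mathsf{Q}\in\mathcal{C}}\mathsf{E}_\mathsf{Q}|X|I(|X|>n)=0\}$. For a random vector $Y$, $\mathsf{E}(\mathcal{D}\mid Y):=\{\mathsf{E}(Z\mid Y):Z\in\mathcal{D}\}$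 and $u^f(X;Y):=\inf_{\mathsf{Q}\in\mathsf{E}(\mathcal{D}\mid Y)}\mathsf{E}_\mathsf{Q}X$. Extreme measures: $\mathcal{X}_\mathcal{D}(W)=\{\mathsf{Q}\in\mathcal{D}:\mathsf{E}_\mathsf{Q}W=u(W)\in(-\infty,\infty)\}$ and $\mathcal{X}_{\mathsf{E}(\mathcal{D}\mid Y)}(W)=\{\mathsf{Q}\in\mathsf{E}(\mathcal{D}\mid Y):\mathsf{E}_\mathsf{Q}W=u^f(W;Y)\in(-\infty,\infty)\}$. Utility contribution: $u^c(X;W)=\inf_{\mathsf{Q}\in\mathcal{X}_\mathcal{D}(W)}\mathsf{E}_\mathsf{Q}X$; factor utility contribution: $u^{fc}(X;Y;W)=\inf_{\mathsf{Q}\in\mathcal{X}_{\mathsf{E}(\mathcal{D}\mid Y)}(W)}\mathsf{E}_\mathsf{Q}X$. *)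

theory Defs
  imports "HOL-Probability.Probability"
begin

text \<open>Probability measures absolutely continuous w.r.t. P, identified with densities.\<close>
definition dens :: "'a measure \<Rightarrow> ('a \<Rightarrow> real) set" where
  "dens M = {Z \<in> borel_measurable M. (AE x in M. 0 \<le> Z x) \<and> integrable M Z \<and> integral\<^sup>L M Z = 1}"

text \<open>E_Q X = E_Q X^+ - E_Q X^-, with the convention infinity - infinity = -infinity.\<close>
definition EQ :: "'a measure \<Rightarrow> ('a \<Rightarrow> real) \<Rightarrow> ('a \<Rightarrow> real) \<Rightarrow> ereal" where
  "EQ M Z X =
    (let p = (\<integral>\<^sup>+ x. ennreal (Z x * max (X x) 0) \<partial>M);
         n = (\<integral>\<^sup>+ x. ennreal (Z x * max (- X x) 0) \<partial>M)
     in if n = \<infinity> then -\<infinity> else enn2ereal p - enn2ereal n)"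

definition coherent_utility :: "'a measure \<Rightarrow> (('a \<Rightarrow> real) \<Rightarrow> ereal) \<Rightarrow> bool" where
  "coherent_utility M u \<longleftrightarrow>
    (\<exists>D. D \<noteq> {} \<and> D \<subseteq> dens M \<and> (\<forall>X \<in> borel_measurable M. u X = (INF Z\<in>D. EQ M Z X)))"

definition det_set :: "'a measure \<Rightarrow> (('a \<Rightarrow> real) \<Rightarrow> ereal) \<Rightarrow> ('a \<Rightarrow> real) set" where
  "det_set M u = {Z \<in> dens M. \<forall>X \<in> borel_measurable M. u X \<le> EQ M Z X}"

definition L1s :: "'a measure \<Rightarrow> ('a \<Rightarrow> real) set \<Rightarrow> ('a \<Rightarrow> real) set" where
  "L1s M C = {X \<in> borel_measurable M.
     (\<lambda>n::nat. SUP Z\<in>C. EQ M Z (\<lambda>x. \<bar>X x\<bar> * indicator {y. \<bar>X y\<bar> > real n} x)) \<longlonglongrightarrow> 0}"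

definition sigY :: "'a measure \<Rightarrow> ('a \<Rightarrow> 'b::euclidean_space) \<Rightarrow> 'a measure" where
  "sigY M Y = vimage_algebra (space M) Y borel"

definition condE :: "'a measure \<Rightarrow> ('a \<Rightarrow> 'b::euclidean_space) \<Rightarrow> ('a \<Rightarrow> real) \<Rightarrow> ('a \<Rightarrow> real)" where
  "condE M Y X = real_cond_exp M (sigY M Y) X"

definition condD :: "'a measure \<Rightarrow> ('a \<Rightarrow> 'b::euclidean_space) \<Rightarrow> ('a \<Rightarrow> real) set \<Rightarrow> ('a \<Rightarrow> real) set" where
  "condD M Y D = condE M Y ` D"

definition uf :: "'a measure \<Rightarrow> ('a \<Rightarrow> real) set \<Rightarrow> ('a \<Rightarrow> real) \<Rightarrow> ('a \<Rightarrow> 'b::euclidean_space) \<Rightarrow> ereal" where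
  "uf M D X Y = (INF Z\<in>condD M Y D. EQ M Z X)"

definition extreme :: "'a measure \<Rightarrow> ('a \<Rightarrow> real) set \<Rightarrow> ereal \<Rightarrow> ('a \<Rightarrow> real) \<Rightarrow> ('a \<Rightarrow> real) set" where
  "extreme M C v W = {Z \<in> C. EQ M Z W = v \<and> v \<noteq> \<infinity> \<and> v \<noteq> -\<infinity>}"

definition uc :: "'a measure \<Rightarrow> (('a \<Rightarrow> real) \<Rightarrow> ereal) \<Rightarrow> ('a \<Rightarrow> real) \<Rightarrow> ('a \<Rightarrow> real) \<Rightarrow> ereal" where
  "uc M u X W = (INF Z\<in>extreme M (det_set M u) (u W) W. EQ M Z X)"

definition ufc :: "'a measure \<Rightarrow> (('a \<Rightarrow> real) \<Rightarrow> ereal) \<Rightarrow> ('a \<Rightarrow> real) \<Rightarrow> ('a \<Rightarrow> 'b::euclidean_space) \<Rightarrow> ('a \<Rightarrow> real) \<Rightarrow> ereal" where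
  "ufc M u X Y W = (INF Z\<in>extreme M (condD M Y (det_set M u)) (uf M (det_set M u) W Y) W. EQ M Z X)"

end

theory Submission
  imports Defs
begin

text \<open>Conditional expectation is self-adjoint against densities: for \<open>Z \<in> D\<close>,
  E_{E(Z|Y)} V = E[E(Z|Y) V] = E[Z E(V|Y)] = E_Z E(V|Y), the products being integrable
  because V lies in L1s(E(D|Y)). As Z \<mapsto> E(Z|Y) maps D onto E(D|Y), this gives
  u^f(W;Y) = u(E(W|Y)) and identifies the extreme measures of E(D|Y) at W with the images
  of the extreme measures of D at E(W|Y). Taking infima of E_{E(Z|Y)} X = E_Z E(X|Y) over
  these two sets yields the theorem.\<close>

lemma EQ_eq_integral:
  assumes [measurable]: "Z \<in> borel_measurable M" "f \<in> borel_measurable M"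
    and Z_nonneg: "AE x in M. 0 \<le> Z x" and int: "integrable M (\<lambda>x. Z x * f x)"
  shows "EQ M Z f = ereal (\<integral>x. Z x * f x \<partial>M)"
proof -
  have int_pos: "integrable M (\<lambda>x. Z x * max (f x) 0)"
    and int_neg: "integrable M (\<lambda>x. Z x * max (- f x) 0)"
    by (rule Bochner_Integration.integrable_bound[OF int],
        use Z_nonneg in \<open>auto elim!: AE_mp intro!: AE_I2 mult_left_mono simp: abs_mult\<close>)+
  have "(\<integral>\<^sup>+ x. ennreal (Z x * max (f x) 0) \<partial>M) = ennreal (\<integral>x. Z x * max (f x) 0 \<partial>M)"
    and "(\<integral>\<^sup>+ x. ennreal (Z x * max (- f x) 0) \<partial>M) = ennreal (\<integral>x. Z x * max (- f x) 0 \<partial>M)"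
    by (rule nn_integral_eq_integral[OF int_pos] nn_integral_eq_integral[OF int_neg],
        use Z_nonneg in auto)+
  moreover have "0 \<le> (\<integral>x. Z x * max (f x) 0 \<partial>M)" "0 \<le> (\<integral>x. Z x * max (- f x) 0 \<partial>M)"
    by (rule integral_nonneg_AE, use Z_nonneg in auto)+
  moreover have "(\<integral>x. Z x * f x \<partial>M) = (\<integral>x. Z x * max (f x) 0 - Z x * max (- f x) 0 \<partial>M)"
    by (rule Bochner_Integration.integral_cong) (auto simp: max_def algebra_simps)
  ultimately show ?thesis
    using int_pos int_neg by (simp add: EQ_def Let_def)
qed

lemma EQ_eq_nn_integral:
  assumes "\<And>x. 0 \<le> g x"
  shows "EQ M Z g = enn2ereal (\<integral>\<^sup>+ x. ennreal (Z x * g x) \<partial>M)"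
proof -
  have "max (g x) 0 = g x" "max (- g x) 0 = 0" for x
    using assms[of x] by auto
  then show ?thesis
    by (simp add: EQ_def zero_ennreal.rep_eq)
qed

lemma L1s_integrable_mult:
  assumes "X \<in> L1s M C" and "Z \<in> C" and [measurable]: "Z \<in> borel_measurable M"
    and Z_nonneg: "AE x in M. 0 \<le> Z x" and "integrable M Z"
  shows "integrable M (\<lambda>x. Z x * X x)"
proof -
  have [measurable]: "X \<in> borel_measurable M"
    using assms(1) by (simp add: L1s_def)
  \<comment> \<open>Bound \<open>\<bar>X\<bar>\<close> by its tail above some level N, which L1s controls, plus N.\<close>
  define tail where "tail n = (\<lambda>x. \<bar>X x\<bar> * indicator {y. \<bar>X y\<bar> > real n} x)" for n :: nat
  have "(\<lambda>n. SUP Z\<in>C. EQ M Z (tail n)) \<longlonglongrightarrow> 0"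
    using assms(1) by (simp add: L1s_def tail_def)
  then have "\<forall>\<^sub>F n in sequentially. (SUP Z\<in>C. EQ M Z (tail n)) < 1"
    by (rule order_tendstoD) simp
  then obtain N where "(SUP Z\<in>C. EQ M Z (tail N)) < 1"
    by (auto simp: eventually_sequentially)
  then have "EQ M Z (tail N) < 1"
    using SUP_upper[OF \<open>Z \<in> C\<close>, of "\<lambda>Z. EQ M Z (tail N)"] by (meson order_le_less_trans)
  then have tail_finite: "(\<integral>\<^sup>+ x. ennreal (Z x * tail N x) \<partial>M) \<noteq> \<infinity>"
    by (subst (asm) EQ_eq_nn_integral) (auto simp: tail_def)
  have "(\<integral>\<^sup>+ x. ennreal (N * Z x) \<partial>M) = ennreal (\<integral>x. N * Z x \<partial>M)"
    using Z_nonneg by (intro nn_integral_eq_integral integrable_mult_right assms) auto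
  then have head_finite: "(\<integral>\<^sup>+ x. ennreal (N * Z x) \<partial>M) \<noteq> \<infinity>"
    by simp
  have "(\<integral>\<^sup>+ x. norm (Z x * X x) \<partial>M) \<le> (\<integral>\<^sup>+ x. ennreal (Z x * tail N x) + ennreal (N * Z x) \<partial>M)"
  proof (rule nn_integral_mono_AE)
    show "AE x in M. ennreal (norm (Z x * X x)) \<le> ennreal (Z x * tail N x) + ennreal (N * Z x)"
      using Z_nonneg
    proof eventually_elim
      case (elim x)
      have "Z x * \<bar>X x\<bar> \<le> Z x * N" if "\<bar>X x\<bar> \<le> N"
        using that elim by (rule mult_left_mono)
      then have "norm (Z x * X x) \<le> Z x * tail N x + N * Z x"
        using elim by (cases "\<bar>X x\<bar> > N") (auto simp: tail_def abs_mult mult.commute)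
      then show ?case
        using elim by (simp add: tail_def ennreal_plus[symmetric] ennreal_leI del: ennreal_plus)
    qed
  qed
  also have "\<dots> = (\<integral>\<^sup>+ x. ennreal (Z x * tail N x) \<partial>M) + (\<integral>\<^sup>+ x. ennreal (N * Z x) \<partial>M)"
    by (rule nn_integral_add) (auto simp: tail_def)
  also have "\<dots> < \<infinity>"
    using tail_finite head_finite by (simp add: less_top)
  finally show ?thesis
    by (intro integrableI_bounded) auto
qed

context sigma_finite_subalgebra
begin

lemma nn_cond_exp_eq_real_cond_exp:
  assumes [measurable]: "Z \<in> borel_measurable M"
    and Z_nonneg: "AE x in M. 0 \<le> Z x" and "integrable M Z"
  shows "AE x in M. nn_cond_exp M F (\<lambda>x. ennreal (Z x)) x = ennreal (real_cond_exp M F Z x)"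
proof -
  have "AE x in M. nn_cond_exp M F (\<lambda>x. ennreal (- Z x)) x = nn_cond_exp M F (\<lambda>x. 0) x"
    by (rule nn_cond_exp_cong) (use Z_nonneg in \<open>auto simp: ennreal_neg\<close>)
  moreover have "AE x in M. 0 = nn_cond_exp M F (\<lambda>x. 0) x"
    by (rule nn_cond_exp_F_meas) auto
  moreover have "(\<integral>\<^sup>+ x. 1 * nn_cond_exp M F (\<lambda>x. ennreal (Z x)) x \<partial>M) = (\<integral>\<^sup>+ x. 1 * ennreal (Z x) \<partial>M)"
    by (rule nn_cond_exp_intg) auto
  then have "(\<integral>\<^sup>+ x. nn_cond_exp M F (\<lambda>x. ennreal (Z x)) x \<partial>M) \<noteq> \<infinity>"
    using nn_integral_eq_integral[OF \<open>integrable M Z\<close> Z_nonneg] by simp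
  then have "AE x in M. nn_cond_exp M F (\<lambda>x. ennreal (Z x)) x \<noteq> \<infinity>"
    by (intro nn_integral_PInf_AE) auto
  ultimately show ?thesis
    by eventually_elim (auto simp: real_cond_exp_def ennreal_enn2real_if)
qed

lemma integrable_mult_real_cond_exp_swap:
  assumes [measurable]: "Z \<in> borel_measurable M" "X \<in> borel_measurable M"
    and Z_nonneg: "AE x in M. 0 \<le> Z x" and "integrable M Z"
    and int: "integrable M (\<lambda>x. real_cond_exp M F Z x * X x)"
  shows "integrable M (\<lambda>x. Z x * real_cond_exp M F X x)"
proof -
  let ?nnE = "\<lambda>f. nn_cond_exp M F (\<lambda>x. ennreal (f x))"
  have "(\<integral>\<^sup>+ x. norm (Z x * real_cond_exp M F X x) \<partial>M) \<le> (\<integral>\<^sup>+ x. ennreal (Z x) * ?nnE (\<lambda>x. \<bar>X x\<bar>) x \<partial>M)"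
  proof (rule nn_integral_mono_AE)
    show "AE x in M. ennreal (norm (Z x * real_cond_exp M F X x)) \<le> ennreal (Z x) * ?nnE (\<lambda>x. \<bar>X x\<bar>) x"
      using real_cond_exp_abs[OF \<open>X \<in> borel_measurable M\<close>] Z_nonneg
      by eventually_elim (auto simp: abs_mult ennreal_mult intro: mult_left_mono)
  qed
  also have "\<dots> = (\<integral>\<^sup>+ x. ?nnE (\<lambda>x. \<bar>X x\<bar>) x * ?nnE Z x \<partial>M)"
    using nn_cond_exp_intg[of "?nnE (\<lambda>x. \<bar>X x\<bar>)" Z] by (simp add: mult.commute)
  also have "\<dots> = (\<integral>\<^sup>+ x. ?nnE Z x * ennreal \<bar>X x\<bar> \<partial>M)"
    using nn_cond_exp_intg[of "?nnE Z" "\<lambda>x. \<bar>X x\<bar>"] by (simp add: mult.commute)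
  also have "\<dots> = (\<integral>\<^sup>+ x. norm (real_cond_exp M F Z x * X x) \<partial>M)"
    using nn_cond_exp_eq_real_cond_exp[OF _ Z_nonneg \<open>integrable M Z\<close>] real_cond_exp_pos[OF Z_nonneg]
    by (intro nn_integral_cong_AE) (auto simp: abs_mult ennreal_mult)
  also have "\<dots> < \<infinity>"
    using int by (simp add: integrable_iff_bounded)
  finally show ?thesis
    by (intro integrableI_bounded) auto
qed

lemma integral_mult_real_cond_exp_swap:
  assumes [measurable]: "Z \<in> borel_measurable M" "X \<in> borel_measurable M"
    and "AE x in M. 0 \<le> Z x" and "integrable M Z"
    and int: "integrable M (\<lambda>x. real_cond_exp M F Z x * X x)"
  shows "(\<integral>x. Z x * real_cond_exp M F X x \<partial>M) = (\<integral>x. real_cond_exp M F Z x * X x \<partial>M)"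
proof -
  have "integrable M (\<lambda>x. real_cond_exp M F X x * Z x)"
    using integrable_mult_real_cond_exp_swap[OF assms] by (simp add: mult.commute)
  then have "(\<integral>x. real_cond_exp M F X x * Z x \<partial>M) = (\<integral>x. real_cond_exp M F X x * real_cond_exp M F Z x \<partial>M)"
    by (rule real_cond_exp_intg(2)[symmetric]) auto
  also have "\<dots> = (\<integral>x. real_cond_exp M F Z x * X x \<partial>M)"
    using real_cond_exp_intg(2)[OF int] by (simp add: mult.commute)
  finally show ?thesis
    by (simp add: mult.commute)
qed

end

lemma sigma_finite_subalgebra_sigY:
  assumes "finite_measure M" and [measurable]: "Y \<in> borel_measurable M"
  shows "sigma_finite_subalgebra M (sigY M Y)"
proof -
  have "subalgebra M (sigY M Y)"
    by (auto simp: subalgebra_def sigY_def sets_vimage_algebra2)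
  then have "finite_measure_subalgebra M (sigY M Y)"
    using assms(1) by (simp add: finite_measure_subalgebra_def finite_measure_subalgebra_axioms_def)
  then show ?thesis
    by (rule finite_measure_subalgebra_is_sigma_finite)
qed

lemma EQ_condE_swap:
  assumes "finite_measure M" and [measurable]: "Y \<in> borel_measurable M"
    and "Z \<in> D" "Z \<in> dens M" and V: "V \<in> L1s M (condD M Y D)"
  shows "EQ M (condE M Y Z) V = EQ M Z (condE M Y V)"
proof -
  interpret sigma_finite_subalgebra M "sigY M Y"
    using assms(1,2) by (rule sigma_finite_subalgebra_sigY)
  have [measurable]: "Z \<in> borel_measurable M" "V \<in> borel_measurable M"
    and Z_nonneg: "AE x in M. 0 \<le> Z x" and "integrable M Z"
    using \<open>Z \<in> dens M\<close> V by (auto simp: dens_def L1s_def)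
  have condE_nonneg: "AE x in M. 0 \<le> condE M Y Z x"
    unfolding condE_def using Z_nonneg by (rule real_cond_exp_pos) simp
  have int: "integrable M (\<lambda>x. condE M Y Z x * V x)"
    using V \<open>Z \<in> D\<close> condE_nonneg \<open>integrable M Z\<close>
    by (intro L1s_integrable_mult) (auto simp: condD_def condE_def)
  have "EQ M (condE M Y Z) V = ereal (\<integral>x. condE M Y Z x * V x \<partial>M)"
    using condE_nonneg int by (intro EQ_eq_integral) (auto simp: condE_def)
  also have "\<dots> = ereal (\<integral>x. Z x * condE M Y V x \<partial>M)"
    using integral_mult_real_cond_exp_swap[OF _ _ Z_nonneg \<open>integrable M Z\<close>] int
    by (simp add: condE_def)
  also have "\<dots> = EQ M Z (condE M Y V)"
    using integrable_mult_real_cond_exp_swap[OF _ _ Z_nonneg \<open>integrable M Z\<close>] int Z_nonneg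
    by (intro EQ_eq_integral[symmetric]) (auto simp: condE_def)
  finally show ?thesis .
qed

lemma coherent_utility_eq_INF_det_set:
  assumes "coherent_utility M u" and "V \<in> borel_measurable M"
  shows "u V = (INF Z\<in>det_set M u. EQ M Z V)"
proof (rule antisym)
  show "u V \<le> (INF Z\<in>det_set M u. EQ M Z V)"
    using assms(2) by (auto simp: det_set_def intro: INF_greatest)
  obtain D where "D \<subseteq> dens M" and u_eq: "\<And>X. X \<in> borel_measurable M \<Longrightarrow> u X = (INF Z\<in>D. EQ M Z X)"
    using assms(1) unfolding coherent_utility_def by blast
  then have "D \<subseteq> det_set M u"
    by (auto simp: det_set_def intro: INF_lower)
  then show "(INF Z\<in>det_set M u. EQ M Z V) \<le> u V"
    unfolding u_eq[OF assms(2)] by (rule INF_superset_mono) simp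
qed

lemma uf_det_set_eq_condE:
  assumes "finite_measure M" "Y \<in> borel_measurable M" and "coherent_utility M u"
    and "W \<in> L1s M (condD M Y (det_set M u))"
  shows "uf M (det_set M u) W Y = u (condE M Y W)"
proof -
  have "u (condE M Y W) = (INF Z\<in>det_set M u. EQ M Z (condE M Y W))"
    using assms(3) by (rule coherent_utility_eq_INF_det_set) (simp add: condE_def)
  also have "\<dots> = uf M (det_set M u) W Y"
    unfolding uf_def condD_def image_image
    using EQ_condE_swap[OF assms(1,2) _ _ assms(4)] by (auto simp: det_set_def intro!: INF_cong)
  finally show ?thesis ..
qed

lemma extreme_condD_eq_image:
  assumes "\<And>Z. Z \<in> D \<Longrightarrow> EQ M (condE M Y Z) W = EQ M Z (condE M Y W)"
  shows "extreme M (condD M Y D) v W = condE M Y ` extreme M D v (condE M Y W)"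
  using assms by (auto simp: extreme_def condD_def)

theorem theorem6p3:
  fixes M :: "'a measure" and u :: "('a \<Rightarrow> real) \<Rightarrow> ereal"
    and Y :: "'a \<Rightarrow> 'b::euclidean_space" and X W :: "'a \<Rightarrow> real"
  assumes "prob_space M"
    and "coherent_utility M u"
    and "Y \<in> borel_measurable M"
    and "X \<in> L1s M (det_set M u) \<inter> L1s M (condD M Y (det_set M u))"
    and "W \<in> L1s M (det_set M u) \<inter> L1s M (condD M Y (det_set M u))"
    and "integrable M X" and "integrable M W"
  shows "ufc M u X Y W = uc M u (condE M Y X) (condE M Y W)"
proof -
  let ?D = "det_set M u"
  have finite: "finite_measure M"
    using assms(1) by (simp add: prob_space_def)
  have swap: "EQ M (condE M Y Z) V = EQ M Z (condE M Y V)"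
    if "Z \<in> ?D" "V \<in> L1s M (condD M Y ?D)" for Z V
    using EQ_condE_swap[OF finite assms(3) that(1) _ that(2)] that(1) by (simp add: det_set_def)
  have extreme_eq: "extreme M (condD M Y ?D) (uf M ?D W Y) W = condE M Y ` extreme M ?D (u (condE M Y W)) (condE M Y W)"
    using uf_det_set_eq_condE[OF finite assms(3,2)] assms(5) swap
    by (simp add: extreme_condD_eq_image)
  show ?thesis
    unfolding ufc_def uc_def extreme_eq image_image
    by (intro INF_cong) (use swap assms(4) in \<open>auto simp: extreme_def\<close>)
qed

end
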